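(* Let $\mathfrak g=\mathfrak g(\mathfrak l,V,\mathfrak z,\beta)$ be admissible such that the representation of $\mathfrak l$ on $V$ is faithful. For every pointed closed convex cone $C_{\mathfrak z}\subseteq\mathfrak z$, the set $$W_{\mathfrak l}(C_{\mathfrak z})=\{x\in\mathfrak l:\ \forall v\in V:\ [v,[v,x]]\in C_{\mathfrak z}\}$$ is a pointed $\operatorname{Inn}(\mathfrak l)$-invariant closed convex cone in $\mathfrak l$.
   Context: In $\mathfrak g(\mathfrak l,V,\mathfrak z,\beta)=\mathfrak z\oplus V\oplus\mathfrak l$ the bracket is $[(z,v,x),(z',v',x')]=(\beta(v,v'),x.v'-x'.v,[x,x'])$, so for $v\in V$, $x\in\mathfrak l$: $[v,[v,x]]=\beta(x.v,v)$. Here $\mathfrak l$ is reductive, $V$ an $\mathfrak l$-module, $\beta$ skew-symmetric and $\mathfrak l$-invariant. $\mathfrak g$ is admissible if it contains an $\operatorname{Inn}(\mathfrak g)$-invariant pointed (no affine lines) generating (spanning) closed convex subset; standing fact: then $\mathfrak z=\mathfrak z(\mathfrak g)$ and there exist $f\in\mathfrak z^*$, $y\in\mathfrak l$ with $f\circ\beta$ symplectic and $v\mapsto f(\beta(y.v,v))$ positive definite (in particular for each $0\ne v\in V$ there is $w$ with $\beta(v,w)\ne0$). *)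

theory Defs
  imports "HOL-Analysis.Analysis"
begin

definition lie_algebra :: "('a::euclidean_space \<Rightarrow> 'a \<Rightarrow> 'a) \<Rightarrow> bool" where
  "lie_algebra br \<longleftrightarrow> bilinear br \<and> (\<forall>x. br x x = 0) \<and>
     (\<forall>x y z. br x (br y z) + br y (br z x) + br z (br x y) = 0)"

definition lie_ideal :: "('a::euclidean_space \<Rightarrow> 'a \<Rightarrow> 'a) \<Rightarrow> 'a set \<Rightarrow> bool" where
  "lie_ideal br I \<longleftrightarrow> subspace I \<and> (\<forall>x y. y \<in> I \<longrightarrow> br x y \<in> I)"

text \<open>Reductive: the adjoint representation is semisimple, i.e. every ideal has a
  complementary ideal.\<close>
definition reductive :: "('a::euclidean_space \<Rightarrow> 'a \<Rightarrow> 'a) \<Rightarrow> bool" where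
  "reductive br \<longleftrightarrow> lie_algebra br \<and>
     (\<forall>I. lie_ideal br I \<longrightarrow> (\<exists>J. lie_ideal br J \<and> I \<inter> J = {0} \<and>
          {a + b | a b. a \<in> I \<and> b \<in> J} = UNIV))"

definition lie_module :: "('l::euclidean_space \<Rightarrow> 'l \<Rightarrow> 'l) \<Rightarrow> ('l \<Rightarrow> 'v::euclidean_space \<Rightarrow> 'v) \<Rightarrow> bool" where
  "lie_module br act \<longleftrightarrow> bilinear act \<and>
     (\<forall>x y v. act (br x y) v = act x (act y v) - act y (act x v))"

definition faithful :: "('l::euclidean_space \<Rightarrow> 'v::euclidean_space \<Rightarrow> 'v) \<Rightarrow> bool" where
  "faithful act \<longleftrightarrow> (\<forall>x. (\<forall>v. act x v = 0) \<longrightarrow> x = 0)"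

definition invariant_skew_form ::
  "('l::euclidean_space \<Rightarrow> 'v::euclidean_space \<Rightarrow> 'v) \<Rightarrow> ('v \<Rightarrow> 'v \<Rightarrow> 'z::euclidean_space) \<Rightarrow> bool" where
  "invariant_skew_form act \<beta> \<longleftrightarrow> bilinear \<beta> \<and> (\<forall>v w. \<beta> v w = - \<beta> w v) \<and>
     (\<forall>x v w. \<beta> (act x v) w + \<beta> v (act x w) = 0)"

text \<open>The bracket of g(l,V,z,beta) = z + V + l.\<close>
definition gbr ::
  "('l \<Rightarrow> 'l \<Rightarrow> 'l) \<Rightarrow> ('l \<Rightarrow> 'v \<Rightarrow> 'v::real_vector) \<Rightarrow> ('v \<Rightarrow> 'v \<Rightarrow> 'z)
    \<Rightarrow> 'z \<times> 'v \<times> 'l \<Rightarrow> 'z \<times> 'v \<times> 'l \<Rightarrow> 'z \<times> 'v \<times> 'l" where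
  "gbr br act \<beta> p q = (case p of (z, v, x) \<Rightarrow> case q of (z', v', x') \<Rightarrow>
      (\<beta> v v', act x v' - act x' v, br x x'))"

text \<open>exp(ad x) as the (always convergent) exponential series.\<close>
definition exp_ad :: "('a::euclidean_space \<Rightarrow> 'a \<Rightarrow> 'a) \<Rightarrow> 'a \<Rightarrow> 'a \<Rightarrow> 'a" where
  "exp_ad br x y = (\<Sum>n. (1 / fact n) *\<^sub>R ((br x ^^ n) y))"

text \<open>Inn: the group generated by all exp(ad x) (closed under inverses since
  exp(ad x)^(-1) = exp(ad(-x))).\<close>
inductive_set Inn :: "('a::euclidean_space \<Rightarrow> 'a \<Rightarrow> 'a) \<Rightarrow> ('a \<Rightarrow> 'a) set"
  for br where
  Inn_id: "id \<in> Inn br"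
| Inn_step: "\<phi> \<in> Inn br \<Longrightarrow> exp_ad br x \<circ> \<phi> \<in> Inn br"

definition Inn_invariant :: "('a::euclidean_space \<Rightarrow> 'a \<Rightarrow> 'a) \<Rightarrow> 'a set \<Rightarrow> bool" where
  "Inn_invariant br S \<longleftrightarrow> (\<forall>\<phi>\<in>Inn br. \<phi> ` S \<subseteq> S)"

definition no_lines :: "'a::real_vector set \<Rightarrow> bool" where
  "no_lines S \<longleftrightarrow> \<not> (\<exists>p d. d \<noteq> 0 \<and> (\<forall>t::real. p + t *\<^sub>R d \<in> S))"

definition pointed_cone :: "'a::real_vector set \<Rightarrow> bool" where
  "pointed_cone C \<longleftrightarrow> convex_cone C \<and> C \<inter> uminus ` C = {0}"

definition admissible :: "('a::euclidean_space \<Rightarrow> 'a \<Rightarrow> 'a) \<Rightarrow> bool" where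
  "admissible br \<longleftrightarrow> (\<exists>C. C \<noteq> {} \<and> closed C \<and> convex C \<and> no_lines C \<and> span C = UNIV
       \<and> Inn_invariant br C)"

definition W_l ::
  "('l \<Rightarrow> 'l \<Rightarrow> 'l) \<Rightarrow> ('l \<Rightarrow> 'v \<Rightarrow> 'v::real_vector) \<Rightarrow> ('v \<Rightarrow> 'v \<Rightarrow> 'z::real_vector)
     \<Rightarrow> 'z set \<Rightarrow> 'l::real_vector set" where
  "W_l br act \<beta> Cz = {x. \<forall>v. gbr br act \<beta> (0, v, 0) (gbr br act \<beta> (0, v, 0) (0, 0, x))
                              \<in> (\<lambda>c. (c, 0, 0)) ` Cz}"

end

theory Submission imports Defs begin

(* Writing q_x(v) = beta(x.v, v), the set W is the intersection of the preimages of Cz under the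
   linear maps x \<mapsto> q_x(v), hence a closed convex cone. Invariance of beta makes
   t \<mapsto> q_{exp(t ad y) x}(exp((t-1) y) v) constant, so q_{exp(ad y) x}(v) = q_x(exp(-y) v) and W is
   Inn(l)-invariant. For pointedness let x \<in> W \<inter> -W, so q_x = 0. By polarization x lies in the ideal N
   of elements whose image x.V is beta-radical. For a beta-radical vector u, ad u is square-zero on g,
   so every exp(ad(t u)) moves a point of the invariant cone of g along an affine line; since that
   cone has no lines and spans g, ad u = 0, i.e. l annihilates every radical vector. Faithfulness
   then gives [N, x] = 0, and the complement of N in the reductive l gives [l, x] = 0. Now ad x is
   square-zero on g as well, the same argument yields x.V = 0, and x = 0 by faithfulness. *)

definition exp_series :: "('a::real_normed_vector \<Rightarrow> 'a) \<Rightarrow> real \<Rightarrow> 'a \<Rightarrow> 'a" where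
  "exp_series f t x = (\<Sum>n. (t^n / fact n) *\<^sub>R (f^^n) x)"

lemma exp_ad_eq_exp_series: "exp_ad br y = exp_series (br y) 1"
  by (simp add: fun_eq_iff exp_ad_def exp_series_def)

lemma exp_series_0 [simp]: "exp_series f 0 x = x"
proof -
  have "(\<lambda>n. ((0::real)^n / fact n) *\<^sub>R (f^^n) x) sums (\<Sum>n\<in>{0}. ((0::real)^n / fact n) *\<^sub>R (f^^n) x)"
    by (rule sums_finite) auto
  then show ?thesis by (simp add: exp_series_def sums_iff)
qed

lemma exp_series_square_zero:
  assumes "f 0 = 0" "f (f x) = 0"
  shows "exp_series f t x = x + t *\<^sub>R f x"
proof -
  have funpow_0: "(f^^m) 0 = 0" for m by (induction m) (auto simp: assms)
  have "(\<lambda>n. (t^n / fact n) *\<^sub>R (f^^n) x) sums (\<Sum>n\<in>{0,1}. (t^n / fact n) *\<^sub>R (f^^n) x)"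
  proof (rule sums_finite)
    fix n :: nat assume "n \<notin> {0,1}"
    then have "n = Suc (Suc (n - 2))" by auto
    then have "(f^^n) x = (f^^(n - 2)) (f (f x))" by (metis funpow_Suc_right o_apply)
    then show "(t^n / fact n) *\<^sub>R (f^^n) x = 0" by (simp add: assms funpow_0)
  qed simp
  then show ?thesis by (simp add: exp_series_def sums_iff)
qed

lemma norm_funpow_le:
  fixes f :: "'a::real_normed_vector \<Rightarrow> 'a"
  assumes "\<And>v. norm (f v) \<le> norm v * K" "K \<ge> 0"
  shows "norm ((f^^n) x) \<le> K^n * norm x"
proof (induction n)
  case (Suc n)
  have "norm ((f^^Suc n) x) \<le> norm ((f^^n) x) * K" using assms(1) by simp
  also have "\<dots> \<le> K^n * norm x * K" using Suc assms(2) by (simp add: mult_right_mono)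
  finally show ?case by (simp add: algebra_simps)
qed simp

lemma summable_exp_series:
  fixes f :: "'a::euclidean_space \<Rightarrow> 'a"
  assumes "linear f"
  shows "summable (\<lambda>n. (t^n / fact n) *\<^sub>R (f^^n) x)"
proof -
  obtain K where K: "K > 0" "\<And>v. norm (f v) \<le> norm v * K"
    using assms linear_conv_bounded_linear bounded_linear.pos_bounded by blast
  have majorant: "summable (\<lambda>n. inverse (fact n) * (\<bar>t\<bar> * K)^n * norm x)"
    using summable_exp[of "\<bar>t\<bar> * K"] by (rule summable_mult2)
  show ?thesis
  proof (rule summable_comparison_test[OF _ majorant], intro exI allI impI)
    fix n :: nat
    have "norm ((t^n / fact n) *\<^sub>R (f^^n) x) = (\<bar>t\<bar>^n / fact n) * norm ((f^^n) x)"
      by (simp add: power_abs)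
    also have "\<dots> \<le> (\<bar>t\<bar>^n / fact n) * (K^n * norm x)"
      by (rule mult_left_mono[OF norm_funpow_le[OF K(2)]]) (use K in auto)
    also have "\<dots> = inverse (fact n) * (\<bar>t\<bar> * K)^n * norm x"
      by (simp add: power_mult_distrib field_simps)
    finally show "norm ((t^n / fact n) *\<^sub>R (f^^n) x) \<le> inverse (fact n) * (\<bar>t\<bar> * K)^n * norm x" .
  qed
qed

text \<open>Termwise differentiation is done coordinatewise, where the series is a real power series.\<close>

lemma exp_series_has_vector_derivative:
  fixes f :: "'a::euclidean_space \<Rightarrow> 'a"
  assumes "linear f"
  shows "((\<lambda>t. exp_series f t x) has_vector_derivative f (exp_series f t x)) (at t)"
proof -
  have bl: "bounded_linear f" using assms linear_conv_bounded_linear by blast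
  note summable = summable_exp_series[OF assms]
  have coordinate: "((\<lambda>s. exp_series f s x \<bullet> b) has_field_derivative (f (exp_series f t x) \<bullet> b)) (at t)"
    for b :: 'a
  proof -
    define c where "c = (\<lambda>n. ((f^^n) x \<bullet> b) / fact n)"
    have power_series: "exp_series f s x \<bullet> b = (\<Sum>n. c n * s^n)" for s
      unfolding exp_series_def
      by (simp add: bounded_linear.suminf[OF bounded_linear_inner_left summable] c_def field_simps)
    have "summable (\<lambda>n. c n * s^n)" for s
      using bounded_linear.summable[OF bounded_linear_inner_left[of b] summable[of s x]]
      by (simp add: c_def field_simps)
    then have deriv: "((\<lambda>s. \<Sum>n. c n * s^n) has_field_derivative (\<Sum>n. diffs c n * t^n)) (at t)"
      by (rule termdiffs_strong_converges_everywhere)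
    have "f (exp_series f t x) \<bullet> b = (\<Sum>n. f ((t^n / fact n) *\<^sub>R (f^^n) x) \<bullet> b)"
      unfolding exp_series_def
      by (simp add: bounded_linear.suminf[OF bl summable]
          bounded_linear.suminf[OF bounded_linear_inner_left bounded_linear.summable[OF bl summable]])
    also have "\<dots> = (\<Sum>n. diffs c n * t^n)"
      by (simp add: linear_scale[OF assms] diffs_def c_def fact_Suc ac_simps)
    finally show ?thesis using deriv power_series by simp
  qed
  have "((\<lambda>s. \<Sum>b\<in>Basis. (exp_series f s x \<bullet> b) *\<^sub>R b) has_vector_derivative
      (\<Sum>b\<in>Basis. (f (exp_series f t x) \<bullet> b) *\<^sub>R b)) (at t)"
    by (rule has_vector_derivative_sum)
      (use has_vector_derivative_scaleR[OF coordinate has_vector_derivative_const] in simp)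
  then show ?thesis by (simp add: euclidean_representation)
qed

lemma lie_algebra_antisym:
  assumes "lie_algebra br"
  shows "br a b = - br b a"
proof -
  from assms have bbr: "bilinear br" and alt: "\<And>x. br x x = 0" unfolding lie_algebra_def by blast+
  have "0 = br (a + b) (a + b)" using alt by simp
  also have "\<dots> = br a b + br b a"
    unfolding bilinear_ladd[OF bbr] bilinear_radd[OF bbr] by (simp add: alt)
  finally have "br a b + br b a = 0" ..
  then show ?thesis by (simp add: eq_neg_iff_add_eq_0)
qed

lemma reductive_centralizes_ideal:
  assumes red: "reductive br" and N: "lie_ideal br N" "x \<in> N" and "\<And>a. a \<in> N \<Longrightarrow> br a x = 0"
  shows "br c x = 0"
proof -
  have lie: "lie_algebra br" using red unfolding reductive_def by blast
  obtain J where J: "lie_ideal br J" and NJ: "N \<inter> J = {0}" and "{a + b | a b. a \<in> N \<and> b \<in> J} = UNIV"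
    using red N unfolding reductive_def by blast
  then obtain a b where ab: "c = a + b" "a \<in> N" "b \<in> J" by blast
  have "br b x \<in> N" using N unfolding lie_ideal_def by blast
  moreover have "br b x \<in> J"
    using J ab(3) lie_algebra_antisym[OF lie, of b x] unfolding lie_ideal_def
    by (metis subspace_neg)
  ultimately have "br b x = 0" using NJ by blast
  then show ?thesis
    using assms(4)[OF ab(2)] lie ab(1) by (simp add: lie_algebra_def bilinear_ladd)
qed

lemma gbr_simp [simp]:
  "gbr br act \<beta> (z, v, x) (z', v', x') = (\<beta> v v', act x v' - act x' v, br x x')"
  by (simp add: gbr_def)

lemma bilinear_gbr:
  assumes "bilinear br" "bilinear act" "bilinear \<beta>"
  shows "bilinear (gbr br act \<beta>)"
  unfolding bilinear_def
proof (intro allI conjI linearI)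
  fix p q r :: "'c \<times> 'b \<times> 'a" and t :: real
  show "gbr br act \<beta> p (q + r) = gbr br act \<beta> p q + gbr br act \<beta> p r"
    "gbr br act \<beta> p (t *\<^sub>R q) = t *\<^sub>R gbr br act \<beta> p q"
    "gbr br act \<beta> (q + r) p = gbr br act \<beta> q p + gbr br act \<beta> r p"
    "gbr br act \<beta> (t *\<^sub>R q) p = t *\<^sub>R gbr br act \<beta> q p"
    using assms by (cases p; cases q; cases r;
        simp add: bilinear_ladd bilinear_radd bilinear_lmul bilinear_rmul algebra_simps)+
qed

lemma admissible_ad_square_zero:
  fixes G :: "'a::euclidean_space \<Rightarrow> 'a \<Rightarrow> 'a"
  assumes "admissible G" "bilinear G" and square_zero: "\<And>p. G a (G a p) = 0"
  shows "G a p = 0"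
proof -
  obtain C where no_lines: "no_lines C" and span: "span C = UNIV" and inv: "Inn_invariant G C"
    using assms(1) unfolding admissible_def by blast
  have "G a q = 0" if q: "q \<in> C" for q
  proof -
    have "exp_ad G (t *\<^sub>R a) q = q + t *\<^sub>R G a q" for t
      using square_zero assms(2)
      by (simp add: exp_ad_eq_exp_series exp_series_square_zero bilinear_lmul bilinear_rmul bilinear_rzero)
    moreover have "exp_ad G (t *\<^sub>R a) \<in> Inn G" for t
      using Inn_step[OF Inn_id] by simp
    ultimately have "q + t *\<^sub>R G a q \<in> C" for t
      using inv q unfolding Inn_invariant_def by (metis image_subset_iff)
    then show ?thesis using no_lines unfolding no_lines_def by blast
  qed
  moreover have "linear (G a)" using assms(2) unfolding bilinear_def by blast
  ultimately show ?thesis using span by (metis UNIV_I linear_eq_0_on_span)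
qed

lemma closed_linear_preimages:
  fixes L :: "'i \<Rightarrow> 'a::euclidean_space \<Rightarrow> 'b::real_normed_vector"
  assumes "\<And>i. linear (L i)" "closed C"
  shows "closed {x. \<forall>i. L i x \<in> C}"
proof -
  have "{x. \<forall>i. L i x \<in> C} = (\<Inter>i. L i -` C)" by blast
  moreover have "closed (L i -` C)" for i
    using assms by (intro continuous_closed_vimage linear_continuous_at)
      (auto simp: linear_conv_bounded_linear)
  ultimately show ?thesis by (simp add: closed_INT)
qed

lemma convex_cone_linear_preimages:
  assumes "\<And>i. linear (L i)" "convex_cone C"
  shows "convex_cone {x. \<forall>i. L i x \<in> C}"
  using assms unfolding convex_cone_iff by (auto simp: linear_add linear_scale linear_0)

lemma pointed_cone_linear_preimages:
  assumes lin: "\<And>i. linear (L i)" and C: "pointed_cone C"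
    and separating: "\<And>x. (\<forall>i. L i x = 0) \<Longrightarrow> x = 0"
  shows "pointed_cone {x. \<forall>i. L i x \<in> C}"
proof -
  let ?W = "{x. \<forall>i. L i x \<in> C}"
  have "convex_cone C" using C unfolding pointed_cone_def by blast
  then have cone: "convex_cone ?W" by (rule convex_cone_linear_preimages[OF lin])
  have antisymmetric: "x = 0" if "x \<in> ?W" "- x \<in> ?W" for x
  proof (rule separating, intro allI)
    fix i
    have "L i x \<in> C" "- L i x \<in> C" using that linear_neg[OF lin] by auto
    then have "L i x \<in> C \<inter> uminus ` C" by (metis IntI image_eqI minus_minus)
    then show "L i x = 0" using C unfolding pointed_cone_def by blast
  qed
  have "?W \<inter> uminus ` ?W \<subseteq> {0}"
  proof
    fix y assume "y \<in> ?W \<inter> uminus ` ?W"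
    then obtain x where "y \<in> ?W" "x \<in> ?W" "y = - x" by blast
    then show "y \<in> {0}" using antisymmetric[of y] by simp
  qed
  moreover have "0 \<in> ?W \<inter> uminus ` ?W"
    using convex_cone_contains_0[OF cone] by (auto intro: image_eqI[where x = 0])
  ultimately show ?thesis using cone unfolding pointed_cone_def by blast
qed

lemma W_l_eq:
  assumes "bilinear br" "bilinear act" "bilinear \<beta>" "\<And>v w. \<beta> v w = - \<beta> w v"
  shows "W_l br act \<beta> Cz = {x. \<forall>v. \<beta> (act x v) v \<in> Cz}"
proof -
  have "gbr br act \<beta> (0, v, 0) (gbr br act \<beta> (0, v, 0) (0, 0, x)) = (\<beta> (act x v) v, 0, 0)" for v x
    using assms(4)[of v "act x v"] assms(1-3) by (simp add: bilinear_lzero bilinear_rzero bilinear_rneg)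
  then show ?thesis unfolding W_l_def by auto
qed

lemma exp_ad_quadratic_form:
  fixes br :: "'l::euclidean_space \<Rightarrow> 'l \<Rightarrow> 'l" and act :: "'l \<Rightarrow> 'v::euclidean_space \<Rightarrow> 'v"
    and \<beta> :: "'v \<Rightarrow> 'v \<Rightarrow> 'z::euclidean_space"
  assumes "bilinear br" "lie_module br act" "invariant_skew_form act \<beta>"
  shows "\<beta> (act (exp_ad br y x) v) v
       = \<beta> (act x (exp_series (act y) (-1) v)) (exp_series (act y) (-1) v)"
proof -
  from assms(2) have ba: "bilinear act"
    and rep: "\<And>a b v. act (br a b) v = act a (act b v) - act b (act a v)"
    unfolding lie_module_def by blast+
  from assms(3) have bb: "bilinear \<beta>" and inv: "\<And>x v w. \<beta> (act x v) w + \<beta> v (act x w) = 0"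
    unfolding invariant_skew_form_def by blast+
  define z where "z = (\<lambda>t. exp_series (br y) t x)"
  define u where "u = (\<lambda>t. exp_series (act y) (t - 1) v)"
  define k where "k = (\<lambda>t. \<beta> (act (z t) (u t)) (u t))"
  have dz: "(z has_vector_derivative br y (z t)) (at t)" for t
    unfolding z_def using assms(1) by (intro exp_series_has_vector_derivative) (simp add: bilinear_def)
  have du: "(u has_vector_derivative act y (u t)) (at t)" for t
  proof -
    have "((\<lambda>s. exp_series (act y) s v) \<circ> (\<lambda>t. t - 1) has_vector_derivative 1 *\<^sub>R act y (u t)) (at t)"
      using ba unfolding u_def
      by (intro vector_diff_chain_at exp_series_has_vector_derivative)
        (auto simp: has_vector_derivative_diff_const bilinear_def)
    then show ?thesis by (simp add: u_def o_def)
  qed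
  have bba: "bounded_bilinear act" and bbb: "bounded_bilinear \<beta>"
    using ba bb by (simp_all add: bilinear_conv_bounded_bilinear)
  have "(k has_vector_derivative 0) (at t)" for t
  proof -
    have act_deriv: "((\<lambda>t. act (z t) (u t)) has_vector_derivative
        act (z t) (act y (u t)) + act (br y (z t)) (u t)) (at t)"
      by (rule bounded_bilinear.has_vector_derivative[OF bba dz du])
    have "(k has_vector_derivative \<beta> (act (z t) (u t)) (act y (u t))
        + \<beta> (act (z t) (act y (u t)) + act (br y (z t)) (u t)) (u t)) (at t)"
      unfolding k_def by (rule bounded_bilinear.has_vector_derivative[OF bbb act_deriv du])
    moreover have "\<beta> (act (z t) (u t)) (act y (u t))
        + \<beta> (act (z t) (act y (u t)) + act (br y (z t)) (u t)) (u t) = 0"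
      using rep inv[of y "act (z t) (u t)" "u t"] bb
      by (simp add: bilinear_ladd bilinear_lsub algebra_simps)
    ultimately show ?thesis by simp
  qed
  then obtain c where k_const: "\<And>t. k t = c"
    using has_vector_derivative_zero_constant[OF convex_UNIV, of k] by auto
  have "\<beta> (act (exp_ad br y x) v) v = k 1"
    by (simp add: k_def z_def u_def exp_ad_eq_exp_series)
  also have "\<dots> = k 0" by (simp add: k_const)
  also have "\<dots> = \<beta> (act x (exp_series (act y) (-1) v)) (exp_series (act y) (-1) v)"
    by (simp add: k_def z_def u_def)
  finally show ?thesis .
qed

lemma Inn_invariant_quadratic_cone:
  fixes br :: "'l::euclidean_space \<Rightarrow> 'l \<Rightarrow> 'l" and act :: "'l \<Rightarrow> 'v::euclidean_space \<Rightarrow> 'v"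
    and \<beta> :: "'v \<Rightarrow> 'v \<Rightarrow> 'z::euclidean_space"
  assumes "bilinear br" "lie_module br act" "invariant_skew_form act \<beta>"
  shows "Inn_invariant br {x. \<forall>v. \<beta> (act x v) v \<in> Cz}" (is "Inn_invariant br ?W")
  unfolding Inn_invariant_def
proof
  fix \<phi> assume "\<phi> \<in> Inn br"
  then show "\<phi> ` ?W \<subseteq> ?W"
  proof (induction rule: Inn.induct)
    case (Inn_step \<phi> y)
    show ?case
    proof
      fix q assume "q \<in> (exp_ad br y \<circ> \<phi>) ` ?W"
      then obtain x where x: "x \<in> ?W" and q: "q = exp_ad br y (\<phi> x)" by auto
      have "\<phi> x \<in> ?W" using Inn_step.IH x by (rule subsetD[OF _ imageI])
      then show "q \<in> ?W" unfolding q mem_Collect_eq exp_ad_quadratic_form[OF assms] by blast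
    qed
  qed simp
qed

lemma invariant_skew_form_polarize:
  assumes ba: "bilinear act" and form: "invariant_skew_form act \<beta>"
    and zero: "\<And>v. \<beta> (act x v) v = 0"
  shows "\<beta> (act x v) w = 0"
proof -
  from form have bb: "bilinear \<beta>" and skew: "\<And>v w. \<beta> v w = - \<beta> w v"
    and inv: "\<And>x v w. \<beta> (act x v) w + \<beta> v (act x w) = 0"
    unfolding invariant_skew_form_def by blast+
  have "\<beta> (act x v) w + \<beta> (act x w) v = \<beta> (act x (v + w)) (v + w)"
    using zero[of v] zero[of w]
    by (simp add: bilinear_radd[OF ba] bilinear_ladd[OF bb] bilinear_radd[OF bb])
  also have "\<dots> = 0" by (rule zero)
  also have "\<beta> (act x w) v = \<beta> (act x v) w"
    using inv[of x w v] skew[of w "act x v"] by simp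
  finally have "(2::real) *\<^sub>R \<beta> (act x v) w = 0" by (simp add: scaleR_2)
  then show ?thesis by simp
qed

lemma lie_ideal_form_annihilator:
  assumes module: "lie_module br act" and form: "invariant_skew_form act \<beta>"
  shows "lie_ideal br {x. \<forall>v w. \<beta> (act x v) w = 0}"
  unfolding lie_ideal_def
proof (intro conjI allI impI)
  from module have ba: "bilinear act"
    and rep: "\<And>a b v. act (br a b) v = act a (act b v) - act b (act a v)"
    unfolding lie_module_def by blast+
  from form have bb: "bilinear \<beta>" and inv: "\<And>x v w. \<beta> (act x v) w + \<beta> v (act x w) = 0"
    unfolding invariant_skew_form_def by blast+
  show "subspace {x. \<forall>v w. \<beta> (act x v) w = 0}"
    unfolding subspace_def
    by (simp add: bilinear_lzero[OF ba] bilinear_lzero[OF bb] bilinear_ladd[OF ba] bilinear_ladd[OF bb]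
        bilinear_lmul[OF ba] bilinear_lmul[OF bb])
  fix a y assume y: "y \<in> {x. \<forall>v w. \<beta> (act x v) w = 0}"
  have "\<beta> (act (br a y) v) w = 0" for v w
  proof -
    have "\<beta> (act a (act y v)) w = - \<beta> (act y v) (act a w)"
      using inv[of a "act y v" w] by (simp add: eq_neg_iff_add_eq_0)
    then show ?thesis using y by (simp add: rep bilinear_lsub[OF bb])
  qed
  then show "br a y \<in> {x. \<forall>v w. \<beta> (act x v) w = 0}" by blast
qed

lemma admissible_annihilates_radical:
  assumes bilin: "bilinear br" "bilinear act" "bilinear \<beta>" and adm: "admissible (gbr br act \<beta>)"
    and radical: "\<And>w. \<beta> u w = 0"
  shows "act x u = 0"
proof -
  have "gbr br act \<beta> (0, u, 0) (gbr br act \<beta> (0, u, 0) p) = 0" for p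
    using radical bilin
    by (cases p) (simp add: bilinear_lzero bilinear_rzero bilinear_rneg zero_prod_def)
  then have "gbr br act \<beta> (0, u, 0) (0, 0, x) = 0"
    by (rule admissible_ad_square_zero[OF adm bilinear_gbr[OF bilin]])
  then show ?thesis using bilin by (simp add: bilinear_lzero bilinear_rzero zero_prod_def)
qed

lemma quadratic_form_vanishes_imp_zero:
  assumes red: "reductive br" and module: "lie_module br act" and form: "invariant_skew_form act \<beta>"
    and adm: "admissible (gbr br act \<beta>)" and faithful: "faithful act"
    and zero: "\<And>v. \<beta> (act x v) v = 0"
  shows "x = 0"
proof -
  have lie: "lie_algebra br" using red unfolding reductive_def by blast
  have bbr: "bilinear br" using lie unfolding lie_algebra_def by blast
  have ba: "bilinear act" and rep: "\<And>a b v. act (br a b) v = act a (act b v) - act b (act a v)"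
    using module unfolding lie_module_def by blast+
  have bb: "bilinear \<beta>" using form unfolding invariant_skew_form_def by blast
  define N where "N = {y. \<forall>v w. \<beta> (act y v) w = 0}"
  have ideal: "lie_ideal br N" unfolding N_def by (rule lie_ideal_form_annihilator[OF module form])
  have xN: "x \<in> N" unfolding N_def using invariant_skew_form_polarize[OF ba form zero] by blast
  have annihilated: "act c (act a v) = 0" if "a \<in> N" for a c v
    using that admissible_annihilates_radical[OF bbr ba bb adm] unfolding N_def by blast
  have "br a x = 0" if "a \<in> N" for a
    using faithful annihilated[OF that] annihilated[OF xN] unfolding faithful_def by (simp add: rep)
  then have central: "br x c = 0" for c
    using reductive_centralizes_ideal[OF red ideal xN] lie_algebra_antisym[OF lie, of x c] by simp
  have "gbr br act \<beta> (0, 0, x) (gbr br act \<beta> (0, 0, x) p) = 0" for p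
    using annihilated[OF xN] central bbr ba bb
    by (cases p) (simp add: bilinear_lzero bilinear_rzero zero_prod_def)
  then have "gbr br act \<beta> (0, 0, x) (0, v, 0) = 0" for v
    by (rule admissible_ad_square_zero[OF adm bilinear_gbr[OF bbr ba bb]])
  then have "act x v = 0" for v
    using ba bb bbr by (simp add: bilinear_lzero bilinear_rzero zero_prod_def)
  then show ?thesis using faithful unfolding faithful_def by blast
qed

theorem lemma3p16:
  fixes br :: "'l::euclidean_space \<Rightarrow> 'l \<Rightarrow> 'l"
    and act :: "'l \<Rightarrow> 'v::euclidean_space \<Rightarrow> 'v"
    and \<beta> :: "'v \<Rightarrow> 'v \<Rightarrow> 'z::euclidean_space"
    and Cz :: "'z set"
  assumes "reductive br"
    and "lie_module br act"
    and "invariant_skew_form act \<beta>"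
    and "admissible (gbr br act \<beta>)"
    and "faithful act"
    and "closed Cz" and "pointed_cone Cz"
  shows "closed (W_l br act \<beta> Cz) \<and> pointed_cone (W_l br act \<beta> Cz)
         \<and> Inn_invariant br (W_l br act \<beta> Cz)"
proof -
  have bbr: "bilinear br" using assms(1) unfolding reductive_def lie_algebra_def by blast
  have ba: "bilinear act" using assms(2) unfolding lie_module_def by blast
  have bb: "bilinear \<beta>" and skew: "\<And>v w. \<beta> v w = - \<beta> w v"
    using assms(3) unfolding invariant_skew_form_def by blast+
  have lin: "linear (\<lambda>x. \<beta> (act x v) v)" for v
    by (rule linearI)
      (simp_all add: bilinear_ladd[OF ba] bilinear_ladd[OF bb] bilinear_lmul[OF ba] bilinear_lmul[OF bb])
  have "closed {x. \<forall>v. \<beta> (act x v) v \<in> Cz}"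
    using closed_linear_preimages[of "\<lambda>v x. \<beta> (act x v) v", OF lin assms(6)] .
  moreover have "pointed_cone {x. \<forall>v. \<beta> (act x v) v \<in> Cz}"
    using pointed_cone_linear_preimages[of "\<lambda>v x. \<beta> (act x v) v", OF lin assms(7)]
      quadratic_form_vanishes_imp_zero[OF assms(1-5)] by blast
  moreover have "Inn_invariant br {x. \<forall>v. \<beta> (act x v) v \<in> Cz}"
    by (rule Inn_invariant_quadratic_cone[OF bbr assms(2,3)])
  ultimately show ?thesis unfolding W_l_eq[OF bbr ba bb skew] by blast
qed

end
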